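(* Let $n\ge 2$ and $1\le i<n$ be integers with $\gcd(n,i)=1$, let $J_n=\sum_{j=1}^{n-1}E_{j,j+1}\in M_n(\mathbb{C})$, and put $A_n=J_n^i$, $B_n=(J_n^T)^{n-i}$. Define $$\mathcal W(n,i)=\begin{cases}\mathcal V(n-2i)\oplus\mathcal V(-2i), & 2i<n,\\ \mathcal V(n-2i)\oplus\mathcal V(2n-2i), & 2i>n,\\ \mathcal V(0), & i=1,\ n=2.\end{cases}$$ Then the linear span of all words of length exactly $n-2$ in $A_n$ and $B_n$ is contained in $\mathcal W(n,i)$ and is a proper subspace of $\mathcal W(n,i)$.
   Context: For $k\in\{-(n-1),\dots,n-1\}$, the $k$-diagonal of $A=(a_{ij})\in M_n(\mathbb{C})$ consists of the entries $a_{j,j+k}$, and $\mathcal V(k)$ denotes the subspace of $M_n(\mathbb{C})$ of matrices all of whose nonzero entries lie on the $k$-diagonal. A word of length $m$ in $A_n,B_n$ is a product of $m$ factors each equal to $A_n$ or $B_n$; the word of length $0$ is $I_n$. $E_{i,j}$ is the matrix unit. *)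

theory Defs
  imports "Jordan_Normal_Form.Matrix" "HOL-Computational_Algebra.Primes"
begin

(* J_n = sum_{j=1}^{n-1} E_{j,j+1}; 0-based: entry (r,c) is 1 iff c = r+1 *)
definition Jn :: "nat \<Rightarrow> complex mat" where
  "Jn n = mat n n (\<lambda>(r,c). if c = r + 1 then 1 else 0)"

definition An :: "nat \<Rightarrow> nat \<Rightarrow> complex mat" where
  "An n i = Jn n ^\<^sub>m i"

definition Bn :: "nat \<Rightarrow> nat \<Rightarrow> complex mat" where
  "Bn n i = transpose_mat (Jn n) ^\<^sub>m (n - i)"

definition word_mat :: "nat \<Rightarrow> complex mat \<Rightarrow> complex mat \<Rightarrow> bool list \<Rightarrow> complex mat" where
  "word_mat n A B w = foldr (\<lambda>b M. (if b then A else B) * M) w (1\<^sub>m n)"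

definition words_len :: "nat \<Rightarrow> complex mat \<Rightarrow> complex mat \<Rightarrow> nat \<Rightarrow> complex mat set" where
  "words_len n A B m = {word_mat n A B w | w. length w = m}"

definition span_mats :: "nat \<Rightarrow> complex mat set \<Rightarrow> complex mat set" where
  "span_mats n S = {foldr (\<lambda>(c, X) acc. c \<cdot>\<^sub>m X + acc) L (0\<^sub>m n n) | L. set (map snd L) \<subseteq> S}"

definition diagV :: "nat \<Rightarrow> int \<Rightarrow> complex mat set" where
  "diagV n k = {M \<in> carrier_mat n n. \<forall>r<n. \<forall>c<n. M $$ (r,c) \<noteq> 0 \<longrightarrow> int c = int r + k}"

definition sum_space :: "complex mat set \<Rightarrow> complex mat set \<Rightarrow> complex mat set" where
  "sum_space U V = {M + N | M N. M \<in> U \<and> N \<in> V}"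

definition W_space :: "nat \<Rightarrow> nat \<Rightarrow> complex mat set" where
  "W_space n i =
     (if 2 * i < n then sum_space (diagV n (int n - 2 * int i)) (diagV n (- 2 * int i))
      else if 2 * i > n then sum_space (diagV n (int n - 2 * int i)) (diagV n (2 * int n - 2 * int i))
      else diagV n 0)"

end

theory Submission
  imports Defs
begin

(* A_n and B_n are the shift matrices by i and by i - n, so the (r, c) entry of a word in them
   is 1 iff the walk from r with these steps stays in {0..n-1} and ends at c.  A word with q
   letters B thus lies on the diagonal (n-2)i - qn, which is congruent to -2i modulo n, and the
   nonzero diagonals of this kind are exactly those defining W(n,i).
   For properness, the walks from the rows i-1 and i (0-based) are translates of each other as
   long as the first one never stands at n-i-1.  After t steps it is congruent to (i-1) + ti, so
   this would force n to divide (t+2)i, impossible for t < n-2 since gcd(n,i) = 1.  Hence every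
   word, and so the span, has equal entries at (i-1, n-i-1) and (i, n-i), which fails for the
   matrix unit at (i-1, n-i-1), although it lies in V(n-2i). *)

definition mat_subspace :: "nat \<Rightarrow> complex mat set \<Rightarrow> bool" where
  "mat_subspace n S \<longleftrightarrow> S \<subseteq> carrier_mat n n \<and> 0\<^sub>m n n \<in> S \<and>
     (\<forall>X\<in>S. \<forall>Y\<in>S. X + Y \<in> S) \<and> (\<forall>c. \<forall>X\<in>S. c \<cdot>\<^sub>m X \<in> S)"

lemma span_mats_subset:
  assumes "mat_subspace n S" "T \<subseteq> S"
  shows "span_mats n T \<subseteq> S"
proof -
  have "foldr (\<lambda>(c, X) acc. c \<cdot>\<^sub>m X + acc) L (0\<^sub>m n n) \<in> S" if "set (map snd L) \<subseteq> T" for L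
    using that assms by (induction L) (auto simp: mat_subspace_def)
  then show ?thesis by (auto simp: span_mats_def)
qed

lemma mat_subspace_zero_pattern:
  "mat_subspace n {M \<in> carrier_mat n n. \<forall>r<n. \<forall>c<n. P r c \<longrightarrow> M $$ (r, c) = 0}"
    (is "mat_subspace n ?S")
  unfolding mat_subspace_def
proof (intro conjI ballI allI)
  fix X Y assume "X \<in> ?S" "Y \<in> ?S"
  then show "X + Y \<in> ?S" by (clarsimp simp: carrier_matD)
next
  fix a X assume "X \<in> ?S"
  then show "a \<cdot>\<^sub>m X \<in> ?S" by (clarsimp simp: carrier_matD)
qed auto

lemma mat_subspace_entries_eq:
  assumes "r < n" "c < n" "r' < n" "c' < n"
  shows "mat_subspace n {M \<in> carrier_mat n n. M $$ (r, c) = M $$ (r', c')}"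
    (is "mat_subspace n ?S")
  unfolding mat_subspace_def
proof (intro conjI ballI allI)
  fix X Y assume "X \<in> ?S" "Y \<in> ?S"
  then show "X + Y \<in> ?S" using assms by (clarsimp simp: carrier_matD)
next
  fix a X assume "X \<in> ?S"
  then show "a \<cdot>\<^sub>m X \<in> ?S" using assms by (clarsimp simp: carrier_matD)
qed (use assms in auto)

lemma mat_subspace_sum_space:
  assumes "mat_subspace n U" "mat_subspace n V"
  shows "mat_subspace n (sum_space U V)"
proof -
  have U: "U \<subseteq> carrier_mat n n" "0\<^sub>m n n \<in> U" "\<And>X Y. X \<in> U \<Longrightarrow> Y \<in> U \<Longrightarrow> X + Y \<in> U"
      "\<And>c X. X \<in> U \<Longrightarrow> c \<cdot>\<^sub>m X \<in> U"
    and V: "V \<subseteq> carrier_mat n n" "0\<^sub>m n n \<in> V" "\<And>X Y. X \<in> V \<Longrightarrow> Y \<in> V \<Longrightarrow> X + Y \<in> V"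
      "\<And>c X. X \<in> V \<Longrightarrow> c \<cdot>\<^sub>m X \<in> V"
    using assms unfolding mat_subspace_def by blast+
  show ?thesis
    unfolding mat_subspace_def
  proof (intro conjI ballI allI)
    show "sum_space U V \<subseteq> carrier_mat n n"
      using U(1) V(1) by (force simp: sum_space_def)
    have "0\<^sub>m n n = 0\<^sub>m n n + (0\<^sub>m n n :: complex mat)" by simp
    then show "0\<^sub>m n n \<in> sum_space U V"
      using U(2) V(2) unfolding sum_space_def by blast
  next
    fix X Y assume "X \<in> sum_space U V" "Y \<in> sum_space U V"
    then obtain X\<^sub>1 X\<^sub>2 Y\<^sub>1 Y\<^sub>2 where
      XY: "X = X\<^sub>1 + X\<^sub>2" "Y = Y\<^sub>1 + Y\<^sub>2" "X\<^sub>1 \<in> U" "Y\<^sub>1 \<in> U" "X\<^sub>2 \<in> V" "Y\<^sub>2 \<in> V"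
      unfolding sum_space_def by blast
    then have "X\<^sub>1 \<in> carrier_mat n n" "Y\<^sub>1 \<in> carrier_mat n n"
      "X\<^sub>2 \<in> carrier_mat n n" "Y\<^sub>2 \<in> carrier_mat n n"
      using U(1) V(1) by blast+
    then have "X + Y = (X\<^sub>1 + Y\<^sub>1) + (X\<^sub>2 + Y\<^sub>2)"
      unfolding XY by (intro eq_matI) (simp_all add: carrier_matD ac_simps)
    then show "X + Y \<in> sum_space U V"
      using XY U(3) V(3) unfolding sum_space_def by blast
  next
    fix c X assume "X \<in> sum_space U V"
    then obtain X\<^sub>1 X\<^sub>2 where X: "X = X\<^sub>1 + X\<^sub>2" "X\<^sub>1 \<in> U" "X\<^sub>2 \<in> V"
      unfolding sum_space_def by blast
    then have "X\<^sub>1 \<in> carrier_mat n n" "X\<^sub>2 \<in> carrier_mat n n"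
      using U(1) V(1) by blast+
    then have "c \<cdot>\<^sub>m X = c \<cdot>\<^sub>m X\<^sub>1 + c \<cdot>\<^sub>m X\<^sub>2"
      unfolding X by (intro eq_matI) (simp_all add: carrier_matD distrib_left)
    then show "c \<cdot>\<^sub>m X \<in> sum_space U V"
      using X U(4) V(4) unfolding sum_space_def by blast
  qed
qed

lemma subset_sum_space:
  assumes "mat_subspace n U" "mat_subspace n V"
  shows "U \<subseteq> sum_space U V" "V \<subseteq> sum_space U V"
proof -
  show "U \<subseteq> sum_space U V"
  proof
    fix X assume "X \<in> U"
    moreover from this have "X = X + 0\<^sub>m n n" using assms(1) by (auto simp: mat_subspace_def)
    ultimately show "X \<in> sum_space U V"
      using assms(2) unfolding mat_subspace_def sum_space_def by blast
  qed
  show "V \<subseteq> sum_space U V"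
  proof
    fix X assume "X \<in> V"
    moreover from this have "X = 0\<^sub>m n n + X" using assms(2) by (auto simp: mat_subspace_def)
    ultimately show "X \<in> sum_space U V"
      using assms(1) unfolding mat_subspace_def sum_space_def by blast
  qed
qed

lemma diagV_eq_zero_pattern:
  "diagV n k = {M \<in> carrier_mat n n. \<forall>r<n. \<forall>c<n. int c \<noteq> int r + k \<longrightarrow> M $$ (r, c) = 0}"
  by (auto simp: diagV_def)

lemma mat_subspace_diagV: "mat_subspace n (diagV n k)"
  unfolding diagV_eq_zero_pattern by (rule mat_subspace_zero_pattern)

lemma diagV_trivial:
  assumes "int n \<le> \<bar>k\<bar>"
  shows "diagV n k = {0\<^sub>m n n}"
proof -
  have "M = 0\<^sub>m n n" if "M \<in> diagV n k" for M
    using that assms by (intro eq_matI) (force simp: diagV_def)+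
  then show ?thesis using mat_subspace_diagV[of n k] by (auto simp: mat_subspace_def)
qed

lemma mat_subspace_W_space: "mat_subspace n (W_space n i)"
  by (simp add: W_space_def mat_subspace_sum_space mat_subspace_diagV)

lemma diagV_subset_W_space:
  assumes "0 < i" "i < n" "int n dvd k + 2 * int i"
  shows "diagV n k \<subseteq> W_space n i"
proof (cases "int n \<le> \<bar>k\<bar>")
  case True
  then show ?thesis
    using diagV_trivial mat_subspace_W_space by (simp add: mat_subspace_def)
next
  case False
  obtain m where m: "k + 2 * int i = int n * m"
    using assms(3) by (elim dvdE)
  have "int n * (- 1) < int n * m" "int n * m < int n * 3"
    using False m assms(2) by linarith+
  moreover have "0 < int n"
    using assms(2) by simp
  ultimately have "- 1 < m" "m < 3"
    by (simp_all only: mult_less_cancel_left_pos)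
  then have "m = 0 \<or> m = 1 \<or> m = 2"
    by auto
  note summands = subset_sum_space[OF mat_subspace_diagV mat_subspace_diagV]
  consider "k = - 2 * int i" | "k = int n - 2 * int i" | "k = 2 * int n - 2 * int i"
    using m \<open>m = 0 \<or> m = 1 \<or> m = 2\<close> by fastforce
  then show ?thesis
  proof cases
    case 1
    with False have "2 * i < n" by linarith
    with 1 show ?thesis using summands by (simp add: W_space_def)
  next
    case 2
    then show ?thesis
      using summands by (cases "2 * i = n") (auto simp: W_space_def)
  next
    case 3
    with False have "2 * i > n" by linarith
    with 3 show ?thesis using summands by (simp add: W_space_def)
  qed
qed

definition shift_mat :: "nat \<Rightarrow> int \<Rightarrow> complex mat" where
  "shift_mat n k = mat n n (\<lambda>(r, c). if int c = int r + k then 1 else 0)"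

lemma shift_mat_carrier [simp]: "shift_mat n k \<in> carrier_mat n n"
  by (simp add: shift_mat_def)

lemma shift_mat_mult_index:
  assumes "M \<in> carrier_mat n n" "r < n" "c < n"
  shows "(shift_mat n k * M) $$ (r, c) =
    (if 0 \<le> int r + k \<and> int r + k < int n then M $$ (nat (int r + k), c) else 0)"
proof -
  have "(shift_mat n k * M) $$ (r, c) =
      (\<Sum>m<n. (if int m = int r + k then 1 else 0) * M $$ (m, c))"
    using assms by (simp add: shift_mat_def scalar_prod_def atLeast0LessThan)
  also have "\<dots> = (\<Sum>m<n. if m = nat (int r + k) \<and> 0 \<le> int r + k then M $$ (m, c) else 0)"
    by (intro sum.cong) auto
  also have "\<dots> = (if 0 \<le> int r + k \<and> int r + k < int n then M $$ (nat (int r + k), c) else 0)"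
    by (auto simp: sum.delta' split: if_splits)
  finally show ?thesis .
qed

lemma shift_mat_mult_same_sign:
  assumes "0 \<le> a * b"
  shows "shift_mat n a * shift_mat n b = shift_mat n (a + b)"
proof (rule eq_matI)
  fix r c assume rc: "r < dim_row (shift_mat n (a + b))" "c < dim_col (shift_mat n (a + b))"
  then have "r < n" "c < n" by (simp_all add: shift_mat_def)
  then have "(shift_mat n a * shift_mat n b) $$ (r, c) =
      (if 0 \<le> int r + a \<and> int r + a < int n \<and> int c = int r + a + b then 1 else 0)"
    by (simp add: shift_mat_mult_index) (auto simp: shift_mat_def nat_less_iff)
  also have "\<dots> = shift_mat n (a + b) $$ (r, c)"
    using \<open>r < n\<close> \<open>c < n\<close> assms zero_le_mult_iff[of a b] by (auto simp: shift_mat_def)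
  finally show "(shift_mat n a * shift_mat n b) $$ (r, c) = shift_mat n (a + b) $$ (r, c)" .
qed (simp_all add: shift_mat_def)

lemma shift_mat_pow: "shift_mat n a ^\<^sub>m k = shift_mat n (int k * a)"
proof (induction k)
  case 0
  show ?case by (auto intro!: eq_matI simp: shift_mat_def)
next
  case (Suc k)
  have "0 \<le> (int k * a) * a" by (simp add: mult.assoc)
  then show ?case using Suc by (simp add: shift_mat_mult_same_sign algebra_simps)
qed

lemma Jn_eq_shift_mat: "Jn n = shift_mat n 1"
  by (auto intro!: eq_matI simp: Jn_def shift_mat_def)

lemma transpose_Jn_eq_shift_mat: "transpose_mat (Jn n) = shift_mat n (- 1)"
  by (auto intro!: eq_matI simp: Jn_def shift_mat_def)

lemma An_eq_shift_mat: "An n i = shift_mat n (int i)"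
  by (simp add: An_def Jn_eq_shift_mat shift_mat_pow)

lemma Bn_eq_shift_mat: "i \<le> n \<Longrightarrow> Bn n i = shift_mat n (int i - int n)"
  by (simp add: Bn_def transpose_Jn_eq_shift_mat shift_mat_pow of_nat_diff)

(* Row r of a word in shift matrices is obtained by following the shifts from r: the walk
   ends at the column of the only nonzero entry, and the row vanishes once it leaves [0, n). *)
fun shift_walk :: "nat \<Rightarrow> int \<Rightarrow> int \<Rightarrow> int \<Rightarrow> bool list \<Rightarrow> int option" where
  "shift_walk n a b x [] = Some x"
| "shift_walk n a b x (s # w) =
    (let y = x + (if s then a else b) in if 0 \<le> y \<and> y < int n then shift_walk n a b y w else None)"

lemma word_mat_carrier:
  "A \<in> carrier_mat n n \<Longrightarrow> B \<in> carrier_mat n n \<Longrightarrow> word_mat n A B w \<in> carrier_mat n n"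
  by (induction w) (auto simp: word_mat_def intro!: mult_carrier_mat[of _ n n _ n])

lemma word_mat_shift_index:
  assumes "r < n" "c < n"
  shows "word_mat n (shift_mat n a) (shift_mat n b) w $$ (r, c) =
    (if shift_walk n a b (int r) w = Some (int c) then 1 else 0)"
  using assms(1)
proof (induction w arbitrary: r)
  case Nil
  then show ?case using assms(2) by (simp add: word_mat_def)
next
  case (Cons s w)
  define k where "k = (if s then a else b)"
  have "word_mat n (shift_mat n a) (shift_mat n b) (s # w) =
      shift_mat n k * word_mat n (shift_mat n a) (shift_mat n b) w"
    by (simp add: word_mat_def k_def)
  then show ?case
    using Cons assms(2) word_mat_carrier[OF shift_mat_carrier shift_mat_carrier]
    by (auto simp: shift_mat_mult_index k_def Let_def)
qed

lemma shift_walk_end: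
  "shift_walk n a b x w = Some y \<Longrightarrow>
    y = x + int (count_list w True) * a + int (count_list w False) * b"
proof (induction w arbitrary: x)
  case (Cons s w)
  then show ?case by (cases s) (fastforce simp: Let_def algebra_simps split: if_splits)+
qed simp

lemma word_mat_shift_in_diagV:
  "word_mat n (shift_mat n a) (shift_mat n b) w
    \<in> diagV n (int (count_list w True) * a + int (count_list w False) * b)"
  using word_mat_carrier[OF shift_mat_carrier shift_mat_carrier] shift_walk_end
  by (fastforce simp: diagV_def word_mat_shift_index split: if_splits)

(* Since the step sizes differ by n, the walk from x is congruent to x + t a after t steps; the
   hypothesis keeps it off n - a - 1, the only position from which a step and the same step from
   the next row disagree about staying in [0, n). *)
lemma shift_walk_translate:
  assumes "\<forall>t<length w. \<not> int n dvd x + int (Suc t) * a + 1"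
  shows "shift_walk n a (a - int n) (x + 1) w
    = map_option (\<lambda>y. y + 1) (shift_walk n a (a - int n) x w)"
  using assms
proof (induction w arbitrary: x)
  case (Cons s w)
  define y where "y = x + (if s then a else a - int n)"
  have dvd_shift: "int n dvd y + z \<longleftrightarrow> int n dvd x + a + z" for z
  proof (cases s)
    case False
    then have "x + a + z = (y + z) + int n" by (simp add: y_def)
    then show ?thesis by (simp only: dvd_add_triv_right_iff)
  qed (simp add: y_def)
  have "\<not> int n dvd y + 1"
    using Cons.prems dvd_shift[of 1] by auto
  then have "y + 1 \<noteq> 0" "y + 1 \<noteq> int n" by auto
  then have valid: "(0 \<le> y + 1 \<and> y + 1 < int n) \<longleftrightarrow> (0 \<le> y \<and> y < int n)" by auto
  have "\<forall>t<length w. \<not> int n dvd y + int (Suc t) * a + 1"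
  proof (intro allI impI)
    fix t assume "t < length w"
    then have "\<not> int n dvd x + int (Suc (Suc t)) * a + 1"
      using Cons.prems by auto
    then show "\<not> int n dvd y + int (Suc t) * a + 1"
      using dvd_shift[of "int (Suc t) * a + 1"] by (simp add: algebra_simps)
  qed
  then have IH: "shift_walk n a (a - int n) (y + 1) w
      = map_option (\<lambda>y. y + 1) (shift_walk n a (a - int n) y w)"
    by (rule Cons.IH)
  have step: "x + 1 + (if s then a else a - int n) = y + 1" by (simp add: y_def)
  show ?case
    unfolding shift_walk.simps Let_def step y_def[symmetric] using valid IH by simp
qed simp

lemma An_Bn_word_in_W_space:
  assumes "0 < i" "i < n" "length w = n - 2"
  shows "word_mat n (An n i) (Bn n i) w \<in> W_space n i"
proof -
  define p q where "p = count_list w True" and "q = count_list w False"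
  have "p + q = length w"
    unfolding p_def q_def by (induction w) auto
  then have "int p + int q + 2 = int n"
    using assms by linarith
  then have "int p * int i + int q * (int i - int n) + 2 * int i = int n * (int i - int q)"
    by (simp add: algebra_simps flip: \<open>int p + int q + 2 = int n\<close>)
  then have "int n dvd int p * int i + int q * (int i - int n) + 2 * int i"
    by simp
  moreover have "word_mat n (An n i) (Bn n i) w \<in> diagV n (int p * int i + int q * (int i - int n))"
    using word_mat_shift_in_diagV assms by (simp add: An_eq_shift_mat Bn_eq_shift_mat p_def q_def)
  ultimately show ?thesis
    using diagV_subset_W_space assms by blast
qed

lemma An_Bn_word_index_translate:
  assumes "coprime n i" "0 < i" "i < n" "length w = n - 2"
  shows "word_mat n (An n i) (Bn n i) w $$ (i - 1, n - i - 1)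
    = word_mat n (An n i) (Bn n i) w $$ (i, n - i)"
proof -
  have "\<not> int n dvd int (i - 1) + int (Suc t) * int i + 1" if "t < length w" for t
  proof
    assume "int n dvd int (i - 1) + int (Suc t) * int i + 1"
    moreover have "int (i - 1) + int (Suc t) * int i + 1 = int ((t + 2) * i)"
      using assms(2) by (simp add: of_nat_diff algebra_simps)
    ultimately have "n dvd (t + 2) * i"
      by (simp only: int_dvd_int_iff)
    then have "n dvd t + 2"
      using assms(1) coprime_dvd_mult_left_iff by blast
    then show False
      using that assms(4) by (auto dest: dvd_imp_le)
  qed
  then have walk: "shift_walk n (int i) (int i - int n) (int (i - 1) + 1) w
      = map_option (\<lambda>y. y + 1) (shift_walk n (int i) (int i - int n) (int (i - 1)) w)"
    by (intro shift_walk_translate) auto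
  have "int (i - 1) + 1 = int i" "int (n - i - 1) + 1 = int (n - i)"
    using assms by auto
  then have "shift_walk n (int i) (int i - int n) (int i) w = Some (int (n - i)) \<longleftrightarrow>
      shift_walk n (int i) (int i - int n) (int (i - 1)) w = Some (int (n - i - 1))"
    using walk by (cases "shift_walk n (int i) (int i - int n) (int (i - 1)) w") auto
  then show ?thesis
    using assms by (simp add: An_eq_shift_mat Bn_eq_shift_mat word_mat_shift_index)
qed

lemma span_An_Bn_words_subset_W_space:
  assumes "0 < i" "i < n"
  shows "span_mats n (words_len n (An n i) (Bn n i) (n - 2)) \<subseteq> W_space n i"
proof (rule span_mats_subset[OF mat_subspace_W_space])
  show "words_len n (An n i) (Bn n i) (n - 2) \<subseteq> W_space n i"
    using An_Bn_word_in_W_space assms unfolding words_len_def by auto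
qed

lemma span_An_Bn_words_entries_eq:
  assumes "coprime n i" "0 < i" "i < n"
  shows "span_mats n (words_len n (An n i) (Bn n i) (n - 2))
    \<subseteq> {M \<in> carrier_mat n n. M $$ (i - 1, n - i - 1) = M $$ (i, n - i)}"
proof (rule span_mats_subset)
  show "mat_subspace n {M \<in> carrier_mat n n. M $$ (i - 1, n - i - 1) = M $$ (i, n - i)}"
    using assms by (intro mat_subspace_entries_eq) auto
  show "words_len n (An n i) (Bn n i) (n - 2)
      \<subseteq> {M \<in> carrier_mat n n. M $$ (i - 1, n - i - 1) = M $$ (i, n - i)}"
    using An_Bn_word_index_translate[OF assms] word_mat_carrier[OF shift_mat_carrier shift_mat_carrier]
      assms(3)
    by (auto simp: words_len_def An_eq_shift_mat Bn_eq_shift_mat)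
qed

theorem mainTheorem8:
  fixes n i :: nat
  assumes "n \<ge> 2" and "1 \<le> i" and "i < n" and "gcd n i = 1"
  shows "span_mats n (words_len n (An n i) (Bn n i) (n - 2)) \<subseteq> W_space n i
       \<and> span_mats n (words_len n (An n i) (Bn n i) (n - 2)) \<noteq> W_space n i"
proof
  show "span_mats n (words_len n (An n i) (Bn n i) (n - 2)) \<subseteq> W_space n i"
    using span_An_Bn_words_subset_W_space assms by simp
next
  define E :: "complex mat" where "E = mat n n (\<lambda>rc. if rc = (i - 1, n - i - 1) then 1 else 0)"
  have "E \<in> diagV n (int n - 2 * int i)"
    using assms unfolding E_def diagV_def by (simp add: of_nat_diff)
  then have "E \<in> W_space n i"
    using diagV_subset_W_space[of i n "int n - 2 * int i"] assms by auto
  moreover have "E $$ (i - 1, n - i - 1) \<noteq> E $$ (i, n - i)"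
    using assms by (simp add: E_def)
  ultimately show "span_mats n (words_len n (An n i) (Bn n i) (n - 2)) \<noteq> W_space n i"
    using span_An_Bn_words_entries_eq[of n i] assms by (auto simp: coprime_iff_gcd_eq_1)
qed

end
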